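(* Let $A\in\{0,1\}^{m\times m}$ and $B\in\{0,1\}^{n\times n}$ be non-degenerate and let $\varphi:X_A\to X_B$ be an elementary conjugacy. Define $R_\varphi\in\{0,1\}^{m\times n}$ and $S_\varphi\in\{0,1\}^{n\times m}$ by $(R_\varphi)_{a,b}=1$ iff there is $a'$ with $\varphi_{\mathrm{loc}}(a,a')=b$, and $(S_\varphi)_{b,a}=1$ iff there is $b'$ with $\varphi^{-1}_{\mathrm{loc}}(b,b')=a$. Then $R_\varphi S_\varphi=A$ and $S_\varphi R_\varphi=B$.
   Context: A matrix is non-degenerate if it has no zero rows or columns; products are integer matrix products. $X_A=\{x\in\{1,\dots,m\}^{\mathbb Z}:A_{x_\ell,x_{\ell+1}}=1\ \forall\ell\}$ with the left shift. A conjugacy is a shift-commuting homeomorphism. A conjugacy $\varphi:X_A\to X_B$ is elementary if there are maps $\varphi_{\mathrm{loc}}$ (on pairs $(a,a')$ with $A_{a,a'}=1$) and $\varphi^{-1}_{\mathrm{loc}}$ (on pairs $(b,b')$ with $B_{b,b'}=1$) such that $\varphi(x)_i=\varphi_{\mathrm{loc}}(x_i,x_{i+1})$ and $\varphi^{-1}(y)_i=\varphi^{-1}_{\mathrm{loc}}(y_{i-1},y_i)$ for all $x,y,i$; the existential quantifiers above range over such allowed pairs. *)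

theory Defs
  imports "HOL-Analysis.Analysis"
begin

text \<open>Square/rectangular matrices are functions nat => nat => int, indexed from 1.
  Symbols are 1..m. Points of the shift space are functions int => nat,
  carrying the product topology (Function_Topology) of discrete nat.\<close>

definition zero_one_matrix :: "nat \<Rightarrow> nat \<Rightarrow> (nat \<Rightarrow> nat \<Rightarrow> int) \<Rightarrow> bool" where
  "zero_one_matrix m n A \<longleftrightarrow> (\<forall>i\<in>{1..m}. \<forall>j\<in>{1..n}. A i j = 0 \<or> A i j = 1)"

definition nondegenerate :: "nat \<Rightarrow> (nat \<Rightarrow> nat \<Rightarrow> int) \<Rightarrow> bool" where
  "nondegenerate m A \<longleftrightarrow>
     (\<forall>i\<in>{1..m}. \<exists>j\<in>{1..m}. A i j \<noteq> 0) \<and> (\<forall>j\<in>{1..m}. \<exists>i\<in>{1..m}. A i j \<noteq> 0)"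

definition mat_mult :: "nat \<Rightarrow> (nat \<Rightarrow> nat \<Rightarrow> int) \<Rightarrow> (nat \<Rightarrow> nat \<Rightarrow> int) \<Rightarrow> nat \<Rightarrow> nat \<Rightarrow> int" where
  "mat_mult k R S i j = (\<Sum>l=1..k. R i l * S l j)"

definition shift_space :: "nat \<Rightarrow> (nat \<Rightarrow> nat \<Rightarrow> int) \<Rightarrow> (int \<Rightarrow> nat) set" where
  "shift_space m A = {x. (\<forall>i. x i \<in> {1..m}) \<and> (\<forall>l. A (x l) (x (l + 1)) = 1)}"

definition shift :: "(int \<Rightarrow> nat) \<Rightarrow> (int \<Rightarrow> nat)" where
  "shift x = (\<lambda>i. x (i + 1))"

definition conjugacy ::
  "nat \<Rightarrow> (nat \<Rightarrow> nat \<Rightarrow> int) \<Rightarrow> nat \<Rightarrow> (nat \<Rightarrow> nat \<Rightarrow> int) \<Rightarrow>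
   ((int \<Rightarrow> nat) \<Rightarrow> (int \<Rightarrow> nat)) \<Rightarrow> ((int \<Rightarrow> nat) \<Rightarrow> (int \<Rightarrow> nat)) \<Rightarrow> bool" where
  "conjugacy m A n B \<phi> \<psi> \<longleftrightarrow>
     homeomorphism (shift_space m A) (shift_space n B) \<phi> \<psi> \<and>
     (\<forall>x\<in>shift_space m A. \<phi> (shift x) = shift (\<phi> x))"

definition elementary_with ::
  "nat \<Rightarrow> (nat \<Rightarrow> nat \<Rightarrow> int) \<Rightarrow> nat \<Rightarrow> (nat \<Rightarrow> nat \<Rightarrow> int) \<Rightarrow>
   ((int \<Rightarrow> nat) \<Rightarrow> (int \<Rightarrow> nat)) \<Rightarrow> ((int \<Rightarrow> nat) \<Rightarrow> (int \<Rightarrow> nat)) \<Rightarrow>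
   (nat \<Rightarrow> nat \<Rightarrow> nat) \<Rightarrow> (nat \<Rightarrow> nat \<Rightarrow> nat) \<Rightarrow> bool" where
  "elementary_with m A n B \<phi> \<psi> loc locinv \<longleftrightarrow>
     conjugacy m A n B \<phi> \<psi> \<and>
     (\<forall>x\<in>shift_space m A. \<forall>i. \<phi> x i = loc (x i) (x (i + 1))) \<and>
     (\<forall>y\<in>shift_space n B. \<forall>i. \<psi> y i = locinv (y (i - 1)) (y i))"

definition R_mat :: "nat \<Rightarrow> (nat \<Rightarrow> nat \<Rightarrow> int) \<Rightarrow> (nat \<Rightarrow> nat \<Rightarrow> nat) \<Rightarrow> nat \<Rightarrow> nat \<Rightarrow> int" where
  "R_mat m A loc a b = (if \<exists>a'\<in>{1..m}. A a a' = 1 \<and> loc a a' = b then 1 else 0)"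

definition S_mat :: "nat \<Rightarrow> (nat \<Rightarrow> nat \<Rightarrow> int) \<Rightarrow> (nat \<Rightarrow> nat \<Rightarrow> nat) \<Rightarrow> nat \<Rightarrow> nat \<Rightarrow> int" where
  "S_mat n B locinv b a = (if \<exists>b'\<in>{1..n}. B b b' = 1 \<and> locinv b b' = a then 1 else 0)"

end

theory Submission
  imports Defs
begin

text \<open>
  Write \<open>f\<close> and \<open>g\<close> for the local rules of \<open>\<phi>\<close> and \<open>\<phi>\<inverse>\<close>. The product
  \<open>R a b * S b a''\<close> is \<open>1\<close> exactly when \<open>A a a'' = 1\<close> and \<open>b = f a a''\<close>, so each
  entry of \<open>R S\<close> is a sum with at most one nonzero term, equal to \<open>A a a''\<close>.
  For the nontrivial direction take witnesses \<open>a'\<close> and \<open>b'\<close>, map a point through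
  \<open>(a, a')\<close> to \<open>X\<^sub>B\<close>, splice the image at time \<open>0\<close> with a point through \<open>(b, b')\<close>
  and pull back: since \<open>g\<close> only looks into the past, the preimage still passes
  through \<open>a\<close>, now followed by \<open>g b b' = a''\<close>; so \<open>(a, a'')\<close> is allowed and \<open>f\<close>
  sends it back to \<open>b\<close>. Up to a shift by one the two local rules play symmetric
  roles, which turns \<open>R S = A\<close> into \<open>S R = B\<close>.
\<close>

lemma shift_in_shift_space:
  assumes "x \<in> shift_space m A"
  shows "shift x \<in> shift_space m A"
proof -
  have "A (x (l + 1)) (x (l + 1 + 1)) = 1" for l
    using assms unfolding shift_space_def by blast
  then show ?thesis using assms unfolding shift_space_def shift_def by auto
qed

lemma shift_space_splice:
  assumes "x \<in> shift_space m A" "x' \<in> shift_space m A" "x k = x' k"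
  shows "(\<lambda>i. if i \<le> k then x i else x' i) \<in> shift_space m A"
  unfolding shift_space_def
proof (intro CollectI conjI allI)
  fix l :: int
  consider "l + 1 \<le> k" | "l = k" | "l > k" by linarith
  then show "A ((\<lambda>i. if i \<le> k then x i else x' i) l) ((\<lambda>i. if i \<le> k then x i else x' i) (l + 1)) = 1"
    using assms unfolding shift_space_def by cases auto
qed (use assms in \<open>auto simp: shift_space_def\<close>)

lemma shift_space_extend:
  assumes zo: "zero_one_matrix m m A" and nd: "nondegenerate m A"
    and a: "a \<in> {1..m}" "a' \<in> {1..m}" and aa: "A a a' = 1"
  shows "\<exists>x\<in>shift_space m A. x 0 = a \<and> x 1 = a'"
proof -
  obtain s where s: "\<forall>c\<in>{1..m}. s c \<in> {1..m} \<and> A c (s c) = 1"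
    using nd zo unfolding nondegenerate_def zero_one_matrix_def by metis
  obtain p where p: "\<forall>c\<in>{1..m}. p c \<in> {1..m} \<and> A (p c) c = 1"
    using nd zo unfolding nondegenerate_def zero_one_matrix_def by metis
  have s_iter: "(s ^^ k) a' \<in> {1..m}" for k
    by (induction k) (use s a in auto)
  have p_iter: "(p ^^ k) a \<in> {1..m}" for k
    by (induction k) (use p a in auto)
  define x where "x i = (if i \<ge> 1 then (s ^^ nat (i - 1)) a' else (p ^^ nat (- i)) a)" for i :: int
  have "x \<in> shift_space m A"
    unfolding shift_space_def
  proof (intro CollectI conjI allI)
    fix i show "x i \<in> {1..m}" unfolding x_def using s_iter p_iter by auto
  next
    fix l :: int
    consider "l \<ge> 1" | "l = 0" | "l < 0" by linarith
    then show "A (x l) (x (l + 1)) = 1"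
    proof cases
      case 1
      then have "nat (l + 1 - 1) = Suc (nat (l - 1))" by simp
      then have "x (l + 1) = s (x l)" unfolding x_def using 1 by simp
      then show ?thesis using s s_iter[of "nat (l - 1)"] 1 unfolding x_def by simp
    next
      case 2 then show ?thesis unfolding x_def using aa by simp
    next
      case 3
      then have "nat (- l) = Suc (nat (- (l + 1)))" by simp
      then have "x l = p (x (l + 1))" unfolding x_def using 3 by simp
      then show ?thesis using p p_iter[of "nat (- (l + 1))"] 3 unfolding x_def by simp
    qed
  qed
  moreover have "x 0 = a \<and> x 1 = a'" unfolding x_def by simp
  ultimately show ?thesis by blast
qed

definition block_code :: "(nat \<Rightarrow> nat \<Rightarrow> nat) \<Rightarrow> (int \<Rightarrow> nat) \<Rightarrow> int \<Rightarrow> nat" where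
  "block_code f x = (\<lambda>i. f (x i) (x (i + 1)))"

text \<open>
  An elementary conjugacy is \<open>block_code f\<close> with inverse \<open>shift\<inverse> \<circ> block_code g\<close>.
  Requiring both composites to be the shift removes this offset and makes the
  notion symmetric in the two shift spaces.
\<close>
definition inverse_block_codes ::
  "nat \<Rightarrow> (nat \<Rightarrow> nat \<Rightarrow> int) \<Rightarrow> nat \<Rightarrow> (nat \<Rightarrow> nat \<Rightarrow> int) \<Rightarrow>
   (nat \<Rightarrow> nat \<Rightarrow> nat) \<Rightarrow> (nat \<Rightarrow> nat \<Rightarrow> nat) \<Rightarrow> bool" where
  "inverse_block_codes m A n B f g \<longleftrightarrow>
     (\<forall>x\<in>shift_space m A. block_code f x \<in> shift_space n B \<and> block_code g (block_code f x) = shift x) \<and>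
     (\<forall>y\<in>shift_space n B. block_code g y \<in> shift_space m A \<and> block_code f (block_code g y) = shift y)"

lemma inverse_block_codes_commute:
  "inverse_block_codes m A n B f g \<longleftrightarrow> inverse_block_codes n B m A g f"
  unfolding inverse_block_codes_def by blast

lemma elementary_with_imp_inverse_block_codes:
  assumes "elementary_with m A n B \<phi> \<psi> f g"
  shows "inverse_block_codes m A n B f g"
proof -
  have hom: "homeomorphism (shift_space m A) (shift_space n B) \<phi> \<psi>"
    and \<phi>_code: "\<And>x. x \<in> shift_space m A \<Longrightarrow> \<phi> x = block_code f x"
    and \<psi>_code: "\<And>y i. y \<in> shift_space n B \<Longrightarrow> \<psi> y (i + 1) = block_code g y i"
    using assms unfolding elementary_with_def conjugacy_def block_code_def by auto
  have \<psi>_shift: "block_code g y = shift (\<psi> y)" if "y \<in> shift_space n B" for y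
    using \<psi>_code[OF that] unfolding shift_def by simp
  have \<phi>_in: "\<phi> x \<in> shift_space n B" and \<psi>\<phi>: "\<psi> (\<phi> x) = x"
    if "x \<in> shift_space m A" for x
    using hom that unfolding homeomorphism_def by blast+
  have \<psi>_in: "\<psi> y \<in> shift_space m A" and \<phi>\<psi>: "\<phi> (\<psi> y) = y"
    if "y \<in> shift_space n B" for y
    using hom that unfolding homeomorphism_def by blast+
  show ?thesis
    unfolding inverse_block_codes_def
  proof (intro conjI ballI)
    fix x assume x: "x \<in> shift_space m A"
    show "block_code f x \<in> shift_space n B" using \<phi>_in[OF x] \<phi>_code[OF x] by simp
    have "block_code g (block_code f x) = shift (\<psi> (\<phi> x))"
      using \<phi>_code[OF x] \<psi>_shift[OF \<phi>_in[OF x]] by simp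
    then show "block_code g (block_code f x) = shift x" using \<psi>\<phi>[OF x] by simp
  next
    fix y assume y: "y \<in> shift_space n B"
    show "block_code g y \<in> shift_space m A"
      using \<psi>_shift[OF y] shift_in_shift_space[OF \<psi>_in[OF y]] by simp
    have "block_code f (block_code g y) = block_code f (shift (\<psi> y))"
      using \<psi>_shift[OF y] by simp
    also have "\<dots> = shift (block_code f (\<psi> y))"
      unfolding block_code_def shift_def by simp
    also have "\<dots> = shift y"
      using \<phi>_code[OF \<psi>_in[OF y]] \<phi>\<psi>[OF y] by simp
    finally show "block_code f (block_code g y) = shift y" .
  qed
qed

lemma S_mat_eq_R_mat: "S_mat = R_mat"
  by (intro ext) (simp add: S_mat_def R_mat_def)

lemma R_mat_01: "R_mat m A f a b = 0 \<or> R_mat m A f a b = 1"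
  unfolding R_mat_def by simp

lemma R_mat_eq_1_iff: "R_mat m A f a b = 1 \<longleftrightarrow> (\<exists>a'\<in>{1..m}. A a a' = 1 \<and> f a a' = b)"
  unfolding R_mat_def by simp

context
  fixes m n :: nat and A B :: "nat \<Rightarrow> nat \<Rightarrow> int" and f g :: "nat \<Rightarrow> nat \<Rightarrow> nat"
  assumes codes: "inverse_block_codes m A n B f g"
    and zo: "zero_one_matrix m m A" "zero_one_matrix n n B"
    and nd: "nondegenerate m A" "nondegenerate n B"
begin

private lemma code_to_B: "x \<in> shift_space m A \<Longrightarrow> block_code f x \<in> shift_space n B"
  and code_to_A: "y \<in> shift_space n B \<Longrightarrow> block_code g y \<in> shift_space m A"
  and code_inverse_A: "x \<in> shift_space m A \<Longrightarrow> block_code g (block_code f x) = shift x"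
  and code_inverse_B: "y \<in> shift_space n B \<Longrightarrow> block_code f (block_code g y) = shift y"
  using codes unfolding inverse_block_codes_def by auto

lemma local_rule_in_alphabet:
  assumes a: "a \<in> {1..m}" "a'' \<in> {1..m}" and "A a a'' = 1"
  shows "f a a'' \<in> {1..n}"
proof -
  obtain x where x: "x \<in> shift_space m A" "x 0 = a" "x 1 = a''"
    using shift_space_extend[OF zo(1) nd(1) a \<open>A a a'' = 1\<close>] by blast
  have "block_code f x 0 \<in> {1..n}"
    using code_to_B[OF x(1)] unfolding shift_space_def by blast
  then show ?thesis using x unfolding block_code_def by simp
qed

lemma R_mat_product_eq_1_iff:
  assumes a: "a \<in> {1..m}" "a'' \<in> {1..m}"
  shows "R_mat m A f a b = 1 \<and> R_mat n B g b a'' = 1 \<longleftrightarrow> A a a'' = 1 \<and> b = f a a''"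
proof
  assume "R_mat m A f a b = 1 \<and> R_mat n B g b a'' = 1"
  then obtain a' b' where a': "a' \<in> {1..m}" "A a a' = 1" "f a a' = b"
    and b': "b' \<in> {1..n}" "B b b' = 1" "g b b' = a''"
    unfolding R_mat_eq_1_iff by blast
  obtain x where x: "x \<in> shift_space m A" "x 0 = a" "x 1 = a'"
    using shift_space_extend[OF zo(1) nd(1) a(1) a'(1,2)] by blast
  define y where "y = block_code f x"
  have y: "y \<in> shift_space n B" "y 0 = b"
    using code_to_B[OF x(1)] x a' unfolding y_def block_code_def by auto
  obtain y' where y': "y' \<in> shift_space n B" "y' 0 = b" "y' 1 = b'"
    using shift_space_extend[OF zo(2) nd(2) _ b'(1,2)] y unfolding shift_space_def by blast
  define z where "z = (\<lambda>i. if i \<le> 0 then y i else y' i)"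
  have z: "z \<in> shift_space n B"
    unfolding z_def using shift_space_splice[OF y(1) y'(1)] y(2) y'(2) by simp
  define w where "w = block_code g z"
  have w: "w \<in> shift_space m A" using code_to_A[OF z] unfolding w_def .
  have "w (-1) = block_code g y (-1)"
    unfolding w_def z_def block_code_def by simp
  also have "\<dots> = a" using code_inverse_A[OF x(1)] x(2) unfolding y_def shift_def by simp
  finally have w_neg1: "w (-1) = a" .
  have w_0: "w 0 = a''" using y'(2,3) y(2) b'(3) unfolding w_def z_def block_code_def by simp
  have "A (w (-1)) (w (-1 + 1)) = 1" using w unfolding shift_space_def by blast
  then have "A a a'' = 1" using w_neg1 w_0 by simp
  have "f a a'' = block_code f (block_code g z) (-1)"
    using w_neg1 w_0 unfolding w_def block_code_def by simp
  also have "\<dots> = b" using code_inverse_B[OF z] y(2) unfolding z_def shift_def by simp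
  finally show "A a a'' = 1 \<and> b = f a a''" using \<open>A a a'' = 1\<close> by simp
next
  assume h: "A a a'' = 1 \<and> b = f a a''"
  obtain x where x: "x \<in> shift_space m A" "x 0 = a" "x 1 = a''"
    using shift_space_extend[OF zo(1) nd(1) a] h by blast
  define y where "y = block_code f x"
  have y: "y \<in> shift_space n B" "y 0 = b"
    using code_to_B[OF x(1)] x h unfolding y_def block_code_def by auto
  have "block_code g y 0 = shift x 0" using code_inverse_A[OF x(1)] unfolding y_def by simp
  then have "g b (y 1) = a''" using y(2) x(3) unfolding block_code_def shift_def by simp
  moreover have "y 1 \<in> {1..n}" "B (y 0) (y (0 + 1)) = 1"
    using y(1) unfolding shift_space_def by blast+
  ultimately have "R_mat n B g b a'' = 1"
    using y(2) unfolding R_mat_eq_1_iff by auto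
  moreover have "R_mat m A f a b = 1" using a h unfolding R_mat_eq_1_iff by blast
  ultimately show "R_mat m A f a b = 1 \<and> R_mat n B g b a'' = 1" by simp
qed

lemma mat_mult_R_mat:
  assumes a: "a \<in> {1..m}" "a'' \<in> {1..m}"
  shows "mat_mult n (R_mat m A f) (R_mat n B g) a a'' = A a a''"
proof -
  have A01: "A a a'' = 0 \<or> A a a'' = 1"
    using zo(1) a unfolding zero_one_matrix_def by blast
  have "R_mat m A f a b * R_mat n B g b a'' = (if b = f a a'' then A a a'' else 0)" for b
    using R_mat_product_eq_1_iff[OF a, of b] R_mat_01[of m A f a b] R_mat_01[of n B g b a''] A01
    by auto
  then have "mat_mult n (R_mat m A f) (R_mat n B g) a a'' =
      (\<Sum>b=1..n. if b = f a a'' then A a a'' else 0)"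
    unfolding mat_mult_def by simp
  also have "\<dots> = A a a''"
    using local_rule_in_alphabet[OF a] A01 by (auto simp: sum.delta')
  finally show ?thesis .
qed

end

theorem mainTheorem9:
  fixes m n :: nat and A B :: "nat \<Rightarrow> nat \<Rightarrow> int"
    and \<phi> \<psi> :: "(int \<Rightarrow> nat) \<Rightarrow> (int \<Rightarrow> nat)" and loc locinv :: "nat \<Rightarrow> nat \<Rightarrow> nat"
  assumes "zero_one_matrix m m A" and "zero_one_matrix n n B"
    and "nondegenerate m A" and "nondegenerate n B"
    and "elementary_with m A n B \<phi> \<psi> loc locinv"
  shows "(\<forall>a\<in>{1..m}. \<forall>a''\<in>{1..m}. mat_mult n (R_mat m A loc) (S_mat n B locinv) a a'' = A a a'')
       \<and> (\<forall>b\<in>{1..n}. \<forall>b''\<in>{1..n}. mat_mult m (S_mat n B locinv) (R_mat m A loc) b b'' = B b b'')"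
proof -
  have codes: "inverse_block_codes m A n B loc locinv"
    using elementary_with_imp_inverse_block_codes[OF assms(5)] .
  then have codes': "inverse_block_codes n B m A locinv loc"
    using inverse_block_codes_commute by blast
  show ?thesis
    unfolding S_mat_eq_R_mat
    using mat_mult_R_mat[OF codes assms(1-4)] mat_mult_R_mat[OF codes' assms(2,1,4,3)]
    by blast
qed

end
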